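(* Let $F$ be the elementary cellular automaton with rule number 32. For every nonempty finite word $u\in\{0,1\}^*$, the deterministic communication complexity of $\textsc{SInv}_{F,u}$ restricted to inputs of length $n$ is bounded by a constant independent of $n$.
   Context: An elementary cellular automaton (ECA) with rule number $N\in\{0,\dots,255\}$ is the map $F:\{0,1\}^{\mathbb Z}\to\{0,1\}^{\mathbb Z}$ given by $F(x)_i=f(x_{i-1},x_i,x_{i+1})$. Here the local rule $f:\{0,1\}^3\to\{0,1\}$ is determined by $N=\sum_{a,b,c\in\{0,1\}}2^{4a+2b+c}f(a,b,c)$. For a nonempty finite word $u$, $p_u\in\{0,1\}^{\mathbb Z}$ is defined by $(p_u)_i=u_{i\bmod |u|}$. For a finite word $x$, $p_u[x]$ is the configuration equal to $x$ on positions $0,\dots,|x|-1$ and to $p_u$ elsewhere. $\textsc{SInv}_{F,u}$ is the decision problem: on input a finite word $x$, decide whether there is an integer $w$ such that for all $t\ge0$ the set of positions where $F^t(p_u)$ and $F^t(p_u[x])$ differ is contained in an interval of length $w$. For each $n$, it is regarded as a function $\{0,1\}^n\to\{0,1\}$. For a function $g:X\times Y\to Z$, $D(g)$ is the minimal depth of a deterministic two-party protocol computing $g$. In such a protocol, Alice knows $x$ and Bob knows $y$. The protocol is a binary tree: each internal node is labelled by a function of Alice's input only or of Bob's input only, with values in $\{\text{left},\text{right}\}$, and each leaf is labelled by an output value. For $g:\{0,1\}^m\to Z$, set $D(g)=\max_{0\le i<m}D(g_i)$, where $g_i:\{0,1\}^i\times\{0,1\}^{m-i}\to Z$ is $g_i(x,y)=g(xy)$.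 *)

theory Defs
  imports Main
begin

text \<open>Configurations are maps int => bool (bool encodes {0,1}); words are bool lists.\<close>

type_synonym config = "int \<Rightarrow> bool"

definition bval :: "bool \<Rightarrow> nat" where "bval b = (if b then 1 else 0)"

text \<open>Local rule of ECA number N: f(a,b,c) is bit (4a+2b+c) of N.\<close>
definition eca_local :: "nat \<Rightarrow> bool \<Rightarrow> bool \<Rightarrow> bool \<Rightarrow> bool" where
  "eca_local N a b c = odd (N div 2 ^ (4 * bval a + 2 * bval b + bval c))"

definition eca :: "nat \<Rightarrow> config \<Rightarrow> config" where
  "eca N x = (\<lambda>i. eca_local N (x (i - 1)) (x i) (x (i + 1)))"

definition periodic :: "bool list \<Rightarrow> config" where
  "periodic u = (\<lambda>i. u ! nat (i mod int (length u)))"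

definition patch :: "bool list \<Rightarrow> bool list \<Rightarrow> config" where
  "patch u x = (\<lambda>i. if 0 \<le> i \<and> i < int (length x) then x ! nat i else periodic u i)"

definition SInv :: "nat \<Rightarrow> bool list \<Rightarrow> bool list \<Rightarrow> bool" where
  "SInv N u x = (\<exists>w::nat. \<forall>t::nat. \<exists>a::int.
      {i. (eca N ^^ t) (periodic u) i \<noteq> (eca N ^^ t) (patch u x) i} \<subseteq> {a..<a + int w})"

datatype ('x, 'y, 'z) protocol =
    Leaf 'z
  | AliceNode "'x \<Rightarrow> bool" "('x, 'y, 'z) protocol" "('x, 'y, 'z) protocol"
  | BobNode "'y \<Rightarrow> bool" "('x, 'y, 'z) protocol" "('x, 'y, 'z) protocol"

fun run_protocol :: "('x, 'y, 'z) protocol \<Rightarrow> 'x \<Rightarrow> 'y \<Rightarrow> 'z" where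
  "run_protocol (Leaf z) x y = z"
| "run_protocol (AliceNode f l r) x y = (if f x then run_protocol l x y else run_protocol r x y)"
| "run_protocol (BobNode g l r) x y = (if g y then run_protocol l x y else run_protocol r x y)"

fun depth :: "('x, 'y, 'z) protocol \<Rightarrow> nat" where
  "depth (Leaf z) = 0"
| "depth (AliceNode f l r) = Suc (max (depth l) (depth r))"
| "depth (BobNode g l r) = Suc (max (depth l) (depth r))"

text \<open>D(g_i) for g : {0,1}^m -> Z split at position i (Alice gets the first i bits).\<close>
definition cc_split :: "(bool list \<Rightarrow> 'z) \<Rightarrow> nat \<Rightarrow> nat \<Rightarrow> nat" where
  "cc_split g m i = (LEAST d. \<exists>p :: (bool list, bool list, 'z) protocol.
      depth p = d \<and> (\<forall>x y. length x = i \<longrightarrow> length y = m - i \<longrightarrow> run_protocol p x y = g (x @ y)))"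

text \<open>D(g) = max over 0 <= i < m of D(g_i) (0 for m = 0, empty maximum).\<close>
definition cc :: "(bool list \<Rightarrow> 'z) \<Rightarrow> nat \<Rightarrow> nat" where
  "cc g m = (if m = 0 then 0 else Max ((cc_split g m) ` {..<m}))"

end

theory Submission
  imports Defs
begin

(* Rule 32 sets a cell iff its neighbourhood reads 1 0 1, and iterating
   t times sets cell i iff the radius-t window around i reads 1 0 1 0 ... 1
   (alt_block).  This gives a complete description of SInv for rule 32:
   - if p_u is not alternating, every window of length |u| of p_u contains two equal
     neighbours, so after |u| + |x| steps both orbits are identically 0; before that,
     by locality of cellular automata, they differ only within distance t of the
     patch, so SInv holds for every x;
   - if p_u is alternating, then F^t(p_u) is 1 on every other cell, while a patch that
     disagrees with p_u creates two equal neighbours killing a window of width 2t;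
     the orbits then differ on a set of diameter about 2t, so SInv fails.
   Hence SInv_{32,u}(xy) is decided by a two-round protocol (Alice and Bob each check
   that their part agrees with p_u), and every D(g_i) is at most 2. *)

section \<open>Rule 32 and alternating blocks\<close>

lemma eca32_local: "eca 32 c i = (c (i - 1) \<and> \<not> c i \<and> c (i + 1))"
  unfolding eca_def eca_local_def bval_def
  by (cases "c (i - 1)"; cases "c i"; cases "c (i + 1)"; simp)

definition alt_block :: "nat \<Rightarrow> config \<Rightarrow> int \<Rightarrow> bool" where
  "alt_block t c i = (\<forall>k. i - int t \<le> k \<and> k \<le> i + int t \<longrightarrow> c k = even (k - i + int t))"

lemma alt_block_Suc:
  "alt_block (Suc t) c i = (alt_block t c (i - 1) \<and> \<not> alt_block t c i \<and> alt_block t c (i + 1))"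
proof
  assume big: "alt_block (Suc t) c i"
  have window: "c k = even (k - i + int t + 1)" if "i - int t - 1 \<le> k" "k \<le> i + int t + 1" for k
    using big that unfolding alt_block_def by (simp add: add.assoc)
  have "alt_block t c (i - 1)"
    unfolding alt_block_def
  proof (intro allI impI)
    fix k assume k: "i - 1 - int t \<le> k \<and> k \<le> i - 1 + int t"
    have "k - (i - 1) + int t = k - i + int t + 1" by simp
    then show "c k = even (k - (i - 1) + int t)" using window[of k] k by auto
  qed
  moreover have "alt_block t c (i + 1)"
    unfolding alt_block_def
  proof (intro allI impI)
    fix k assume k: "i + 1 - int t \<le> k \<and> k \<le> i + 1 + int t"
    have "c k = even (k - i + int t + 1)" using k by (intro window) auto
    moreover have "even (k - i + int t + 1) = even (k - (i + 1) + int t)" by presburger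
    ultimately show "c k = even (k - (i + 1) + int t)" by (rule trans)
  qed
  moreover have "\<not> alt_block t c i"
  proof
    assume "alt_block t c i"
    then have "c (i - int t)" unfolding alt_block_def by auto
    then show False using window[of "i - int t"] by simp
  qed
  ultimately show "alt_block t c (i - 1) \<and> \<not> alt_block t c i \<and> alt_block t c (i + 1)"
    by blast
next
  assume "alt_block t c (i - 1) \<and> \<not> alt_block t c i \<and> alt_block t c (i + 1)"
  then have left: "alt_block t c (i - 1)" and mid: "\<not> alt_block t c i"
    and right: "alt_block t c (i + 1)" by auto
  show "alt_block (Suc t) c i"
    unfolding alt_block_def
  proof (intro allI impI)
    fix k assume k: "i - int (Suc t) \<le> k \<and> k \<le> i + int (Suc t)"
    have shift: "k - i + int (Suc t) = k - (i - 1) + int t"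
      "k - i + int (Suc t) = (k - (i + 1) + int t) + 2" by simp_all
    consider "k \<le> i - 1 + int t" | "i + 1 - int t \<le> k" | "t = 0" "k = i"
      using k by linarith
    then show "c k = even (k - i + int (Suc t))"
    proof cases
      case 1
      then show ?thesis using left k shift(1) unfolding alt_block_def by auto
    next
      case 2
      then show ?thesis using right k shift(2) unfolding alt_block_def by auto
    next
      case 3
      then show ?thesis using mid unfolding alt_block_def by auto
    qed
  qed
qed

lemma eca32_iterate: "(eca 32 ^^ t) c i = alt_block t c i"
proof (induction t arbitrary: i)
  case 0
  then show ?case unfolding alt_block_def by auto
next
  case (Suc t)
  then show ?case by (simp add: eca32_local alt_block_Suc)
qed

lemma alt_block_defect:
  assumes "c j = c (j + 1)" "i - int t \<le> j" "j + 1 \<le> i + int t"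
  shows "\<not> alt_block t c i"
proof
  assume "alt_block t c i"
  then have "c j = even (j - i + int t)" "c (j + 1) = even (j - i + int t + 1)"
    using assms(2,3) unfolding alt_block_def by (auto simp: algebra_simps)
  then show False using assms(1) by (metis even_plus_one_iff)
qed

section \<open>Locality of cellular automata\<close>

lemma eca_iterate_local:
  assumes "\<And>k. i - int t \<le> k \<Longrightarrow> k \<le> i + int t \<Longrightarrow> c1 k = c2 k"
  shows "(eca N ^^ t) c1 i = (eca N ^^ t) c2 i"
  using assms
proof (induction t arbitrary: i)
  case 0
  then show ?case by simp
next
  case (Suc t)
  have "(eca N ^^ t) c1 j = (eca N ^^ t) c2 j" if "i - 1 \<le> j" "j \<le> i + 1" for j
    using Suc.IH[of j] Suc.prems that by simp
  then have "eca N ((eca N ^^ t) c1) i = eca N ((eca N ^^ t) c2) i"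
    unfolding eca_def by simp
  then show ?case by simp
qed

lemma patch_outside: "k < 0 \<or> int (length x) \<le> k \<Longrightarrow> patch u x k = periodic u k"
  unfolding patch_def by auto

lemma difference_near_patch:
  "{i. (eca N ^^ t) (periodic u) i \<noteq> (eca N ^^ t) (patch u x) i}
     \<subseteq> {- int t ..< int (length x) + int t}"
proof
  fix i assume "i \<in> {i. (eca N ^^ t) (periodic u) i \<noteq> (eca N ^^ t) (patch u x) i}"
  then have differ: "(eca N ^^ t) (periodic u) i \<noteq> (eca N ^^ t) (patch u x) i" by simp
  show "i \<in> {- int t ..< int (length x) + int t}"
  proof (rule ccontr)
    assume "i \<notin> {- int t ..< int (length x) + int t}"
    then have "periodic u k = patch u x k" if "i - int t \<le> k" "k \<le> i + int t" for k
      using that patch_outside[of k x u] by auto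
    then show False using differ eca_iterate_local[of i t "periodic u" "patch u x" N] by blast
  qed
qed

section \<open>Non-alternating background: SInv always holds\<close>

definition alternating :: "config \<Rightarrow> bool" where
  "alternating c = (\<forall>i. c (i + 1) \<noteq> c i)"

lemma periodic_mod: "a mod int (length u) = b mod int (length u) \<Longrightarrow> periodic u a = periodic u b"
  unfolding periodic_def by simp

lemma periodic_defect_in_window:
  assumes "u \<noteq> []" "\<not> alternating (periodic u)"
  shows "\<exists>j. a \<le> j \<and> j < a + int (length u) \<and> periodic u j = periodic u (j + 1)"
proof -
  define L where "L = int (length u)"
  have "L > 0" using assms(1) unfolding L_def by simp
  obtain j0 where j0: "periodic u (j0 + 1) = periodic u j0"
    using assms(2) unfolding alternating_def by auto
  define j where "j = a + (j0 - a) mod L"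
  have same_class: "j mod L = j0 mod L" unfolding j_def by (simp add: mod_add_right_eq)
  then have "(j + 1) mod L = (j0 + 1) mod L" by (metis mod_add_left_eq)
  then have "periodic u j = periodic u j0" "periodic u (j + 1) = periodic u (j0 + 1)"
    using same_class unfolding L_def by (auto intro!: periodic_mod)
  moreover have "a \<le> j" "j < a + L" unfolding j_def using \<open>L > 0\<close> by auto
  ultimately show ?thesis using j0 unfolding L_def by auto
qed

lemma non_alternating_dies:
  assumes "u \<noteq> []" "\<not> alternating (periodic u)"
    and t: "int (length u) + int (length x) \<le> int t"
  shows "\<not> alt_block t (periodic u) i" "\<not> alt_block t (patch u x) i"
proof -
  define L where "L = int (length u)"
  note defect = periodic_defect_in_window[OF assms(1,2), folded L_def]
  obtain j where j: "i - int t \<le> j" "j < i - int t + L" "periodic u j = periodic u (j + 1)"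
    using defect by blast
  show "\<not> alt_block t (periodic u) i"
    by (rule alt_block_defect[OF j(3)]) (use j t L_def in linarith)+
  show "\<not> alt_block t (patch u x) i"
  proof (cases "i - int t + L < 0")
    case True
    then have "j + 1 < 0" using j by linarith
    then have "patch u x j = patch u x (j + 1)"
      using j patch_outside[of j x u] patch_outside[of "j + 1" x u] by simp
    then show ?thesis by (rule alt_block_defect) (use j t L_def in linarith)+
  next
    case False
    obtain j' where j': "i + int t - L \<le> j'" "j' < i + int t" "periodic u j' = periodic u (j' + 1)"
      using defect[of "i + int t - L"] by auto
    have "int (length x) \<le> j'" using False j' t L_def by linarith
    then have "patch u x j' = patch u x (j' + 1)"
      using j' patch_outside[of j' x u] patch_outside[of "j' + 1" x u] by simp
    then show ?thesis by (rule alt_block_defect) (use j' t L_def in linarith)+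
  qed
qed

lemma non_alternating_SInv:
  assumes "u \<noteq> []" "\<not> alternating (periodic u)"
  shows "SInv 32 u x"
  unfolding SInv_def
proof (intro exI[of _ "2 * length u + 3 * length x"] allI)
  fix t
  define L where "L = int (length u)"
  define n where "n = int (length x)"
  show "\<exists>a. {i. (eca 32 ^^ t) (periodic u) i \<noteq> (eca 32 ^^ t) (patch u x) i}
             \<subseteq> {a ..< a + int (2 * length u + 3 * length x)}"
  proof (cases "L + n \<le> int t")
    case True
    then show ?thesis
      using non_alternating_dies[OF assms] by (simp add: eca32_iterate L_def n_def)
  next
    case False
    then have "{- int t ..< int (length x) + int t}
               \<subseteq> {- (L + n) ..< - (L + n) + int (2 * length u + 3 * length x)}"
      unfolding L_def n_def by auto
    then show ?thesis using difference_near_patch[where N = 32] by blast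
  qed
qed

section \<open>Alternating background: SInv holds only for matching patches\<close>

lemma alternating_shift: "alternating c \<Longrightarrow> c (s + int m) = (c s = even m)"
proof (induction m)
  case 0
  then show ?case by simp
next
  case (Suc m)
  then have "c (s + int m + 1) \<noteq> c (s + int m)" unfolding alternating_def by blast
  then show ?case using Suc by (simp add: algebra_simps)
qed

lemma alt_block_alternating:
  assumes "alternating c"
  shows "alt_block t c i = c (i - int t)"
proof
  assume "alt_block t c i"
  then show "c (i - int t)" unfolding alt_block_def by auto
next
  assume start: "c (i - int t)"
  show "alt_block t c i"
    unfolding alt_block_def
  proof (intro allI impI)
    fix k assume k: "i - int t \<le> k \<and> k \<le> i + int t"
    define m where "m = nat (k - i + int t)"
    have m: "int m = k - i + int t" using k unfolding m_def by simp
    have "c k = c (i - int t + int m)" using m by simp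
    also have "\<dots> = even m" using alternating_shift[OF assms] start by simp
    also have "\<dots> = even (k - i + int t)" unfolding m[symmetric] by simp
    finally show "c k = even (k - i + int t)" .
  qed
qed

lemma alternating_one_of_two:
  assumes "alternating c"
  shows "\<exists>s. (s = k \<or> s = k + 1) \<and> c s"
proof (cases "c k")
  case False
  then have "c (k + 1)" using assms unfolding alternating_def by blast
  then show ?thesis by blast
qed blast

lemma int_predicate_flip: "P a \<Longrightarrow> \<not> P (a + int d) \<Longrightarrow> \<exists>j. P j \<and> \<not> P (j + 1)"
proof (induction d arbitrary: a)
  case 0
  then show ?case by simp
next
  case (Suc d)
  show ?case
  proof (cases "P (a + 1)")
    case True
    moreover have "\<not> P (a + 1 + int d)" using Suc.prems(2) by (simp add: add_ac)
    ultimately show ?thesis by (rule Suc.IH)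
  next
    case False
    then show ?thesis using Suc.prems(1) by blast
  qed
qed

definition agrees_from :: "bool list \<Rightarrow> nat \<Rightarrow> bool list \<Rightarrow> bool" where
  "agrees_from u i y = (\<forall>k < length y. y ! k = periodic u (int i + int k))"

lemma agrees_from_append:
  "agrees_from u i (x @ y) = (agrees_from u i x \<and> agrees_from u (i + length x) y)"
proof
  assume all: "agrees_from u i (x @ y)"
  have "x ! k = periodic u (int i + int k)" if "k < length x" for k
    using all that unfolding agrees_from_def by (metis length_append nth_append trans_less_add1)
  moreover have "y ! k = periodic u (int (i + length x) + int k)" if "k < length y" for k
    using all that unfolding agrees_from_def
    by (metis add.assoc length_append nat_add_left_cancel_less nth_append_length_plus of_nat_add)
  ultimately show "agrees_from u i x \<and> agrees_from u (i + length x) y"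
    unfolding agrees_from_def by blast
next
  assume parts: "agrees_from u i x \<and> agrees_from u (i + length x) y"
  have "(x @ y) ! k = periodic u (int i + int k)" if k: "k < length (x @ y)" for k
  proof (cases "k < length x")
    case True
    then show ?thesis using parts unfolding agrees_from_def by (simp add: nth_append)
  next
    case False
    then have "k - length x < length y" using k by simp
    then have "y ! (k - length x) = periodic u (int (i + length x) + int (k - length x))"
      using parts unfolding agrees_from_def by blast
    then show ?thesis using False by (simp add: nth_append)
  qed
  then show "agrees_from u i (x @ y)" unfolding agrees_from_def by blast
qed

lemma agrees_patch_eq: "agrees_from u 0 x \<Longrightarrow> patch u x = periodic u"
  unfolding agrees_from_def patch_def by (auto simp: fun_eq_iff)

lemma disagreeing_patch_defect:
  assumes "alternating (periodic u)" "\<not> agrees_from u 0 x"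
  shows "\<exists>j. patch u x j = patch u x (j + 1)"
proof -
  let ?same = "\<lambda>k. patch u x k = periodic u k"
  obtain k0 where "k0 < length x" "x ! k0 \<noteq> periodic u (int k0)"
    using assms(2) unfolding agrees_from_def by auto
  then have "\<not> ?same (-1 + int (Suc k0))" unfolding patch_def by auto
  moreover have "?same (-1)" unfolding patch_def by auto
  ultimately obtain j where "?same j" "\<not> ?same (j + 1)"
    using int_predicate_flip[of ?same] by blast
  moreover have "periodic u (j + 1) \<noteq> periodic u j"
    using assms(1) unfolding alternating_def by blast
  ultimately show ?thesis by auto
qed

text \<open>On an alternating background only patches agreeing with p_u are in SInv: a defect
  makes the difference set contain two cells about 2t apart, for every t.\<close>
lemma alternating_SInv_agrees:
  assumes alt: "alternating (periodic u)" and inv: "SInv 32 u x"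
  shows "agrees_from u 0 x"
proof (rule ccontr)
  assume "\<not> agrees_from u 0 x"
  then obtain j where defect: "patch u x j = patch u x (j + 1)"
    using disagreeing_patch_defect[OF alt] by blast
  obtain w where w: "\<forall>t. \<exists>a. {i. alt_block t (periodic u) i \<noteq> alt_block t (patch u x) i}
                              \<subseteq> {a ..< a + int w}"
    using inv unfolding SInv_def eca32_iterate by blast
  define t where "t = w + 2"
  obtain a where a: "{i. alt_block t (periodic u) i \<noteq> alt_block t (patch u x) i} \<subseteq> {a ..< a + int w}"
    using w by blast
  text \<open>Every cell whose window covers the defect and starts on a 1 of p_u is a difference.\<close>
  have differ: "a \<le> s + int t \<and> s + int t < a + int w"
    if "periodic u s" "s \<le> j" "j + 1 \<le> s + 2 * int t" for s
  proof -
    have "alt_block t (periodic u) (s + int t)"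
      using that(1) by (simp add: alt_block_alternating[OF alt])
    moreover have "\<not> alt_block t (patch u x) (s + int t)"
      by (rule alt_block_defect[OF defect]) (use that in auto)
    ultimately show ?thesis using a by auto
  qed
  obtain s1 where s1: "s1 = j - 1 \<or> s1 = j - 1 + 1" "periodic u s1"
    using alternating_one_of_two[OF alt] by blast
  obtain s2 where s2: "s2 = j + 1 - 2 * int t \<or> s2 = j + 1 - 2 * int t + 1" "periodic u s2"
    using alternating_one_of_two[OF alt] by blast
  have "a \<le> s2 + int t" "s1 + int t < a + int w"
    using differ[of s1] differ[of s2] s1 s2 t_def by auto
  then show False using s1 s2 t_def by auto
qed

lemma SInv_unchanged: "patch u x = periodic u \<Longrightarrow> SInv N u x"
  unfolding SInv_def by simp

lemma SInv32_iff:
  assumes "u \<noteq> []"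
  shows "SInv 32 u x = (\<not> alternating (periodic u) \<or> agrees_from u 0 x)"
proof (cases "alternating (periodic u)")
  case True
  then show ?thesis
    using alternating_SInv_agrees[OF True] SInv_unchanged[OF agrees_patch_eq] by blast
next
  case False
  then show ?thesis using non_alternating_SInv[OF assms] by blast
qed

section \<open>Communication complexity\<close>

lemma cc_le_protocol_depth:
  assumes "\<And>i. i < m \<Longrightarrow> \<exists>p. depth p \<le> d \<and>
             (\<forall>x y. length x = i \<longrightarrow> length y = m - i \<longrightarrow> run_protocol p x y = g (x @ y))"
  shows "cc g m \<le> d"
proof -
  have "cc_split g m i \<le> d" if i: "i < m" for i
  proof -
    obtain p where "depth p \<le> d"
      "\<forall>x y. length x = i \<longrightarrow> length y = m - i \<longrightarrow> run_protocol p x y = g (x @ y)"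
      using assms[OF i] by blast
    then show ?thesis unfolding cc_split_def by (blast intro: Least_le order.trans)
  qed
  then show ?thesis unfolding cc_def by (auto simp: Max_le_iff lessThan_empty_iff)
qed

definition sinv32_protocol :: "bool list \<Rightarrow> nat \<Rightarrow> (bool list, bool list, bool) protocol" where
  "sinv32_protocol u i =
     (if alternating (periodic u)
      then AliceNode (agrees_from u 0) (BobNode (agrees_from u i) (Leaf True) (Leaf False)) (Leaf False)
      else Leaf True)"

lemma sinv32_protocol_correct:
  assumes "u \<noteq> []" "length x = i"
  shows "run_protocol (sinv32_protocol u i) x y = SInv 32 u (x @ y)"
  using assms by (simp add: sinv32_protocol_def SInv32_iff agrees_from_append)

theorem mainTheorem10:
  fixes u :: "bool list"
  assumes "u \<noteq> []"
  shows "\<exists>C::nat. \<forall>n::nat. cc (SInv 32 u) n \<le> C"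
proof (intro exI[of _ 2] allI)
  fix n
  show "cc (SInv 32 u) n \<le> 2"
  proof (rule cc_le_protocol_depth)
    fix i
    have "depth (sinv32_protocol u i) \<le> 2"
      unfolding sinv32_protocol_def by simp
    moreover have "\<forall>x y. length x = i \<longrightarrow> length y = n - i \<longrightarrow>
        run_protocol (sinv32_protocol u i) x y = SInv 32 u (x @ y)"
      using sinv32_protocol_correct[OF assms] by blast
    ultimately show "\<exists>p. depth p \<le> 2 \<and> (\<forall>x y. length x = i \<longrightarrow> length y = n - i \<longrightarrow>
        run_protocol p x y = SInv 32 u (x @ y))" by blast
  qed
qed

end
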